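(* Let $\mathbf{X}=(\mathbf{x}^1,\dots,\mathbf{x}^n)\in\mathbb{R}^{n\times T\times q}$ and $\mathbf{X}'=(\mathbf{x}'^1,\dots,\mathbf{x}'^{n})\in\mathbb{R}^{n\times T'\times q}$ be datasets each composed of $n$ time series, with uniform weights $\mathbf{w}=\mathbf{w}'=(1/n,\dots,1/n)$. Then the MAD problem admits an optimal solution $(\boldsymbol\gamma^\star,\boldsymbol\pi^\star)$ whose transportation plan $\boldsymbol\gamma^\star$ is a one-to-one matching, i.e. $n\boldsymbol\gamma^\star$ is a permutation matrix: each sample of $\mathbf{X}$ is matched to exactly one sample of $\mathbf{X}'$ and conversely. The same holds for the $|\mathcal{C}|$-MAD problem for any labels $\mathbf{Y}\in\mathcal{C}^n$ of $\mathbf{X}$.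
   Context: Here $\mathbf{x}^i_t\in\mathbb{R}^q$ is the $t$-th time step of the $i$-th series. The set of couplings is $\Gamma(\mathbf{w},\mathbf{w}')=\{\boldsymbol\gamma\in\mathbb{R}_{\ge0}^{n\times n}:\boldsymbol\gamma\mathbf{1}=\mathbf{w},\ \boldsymbol\gamma^\top\mathbf{1}=\mathbf{w}'\}$. $\mathcal{A}(T,T')$ is the finite set of admissible DTW alignments. These are binary matrices $\boldsymbol\pi\in\{0,1\}^{T\times T'}$ whose nonzero entries form a path from $(1,1)$ to $(T,T')$ using only steps $(1,0)$, $(0,1)$ or $(1,1)$. The cost tensor is $\mathbf{L}(\mathbf{X},\mathbf{X}')$, with entries $L^{i,j}_{t,t'}=\|\mathbf{x}^i_t-\mathbf{x}'^j_{t'}\|_2^2$. For $\boldsymbol\pi\in\mathbb{R}^{T\times T'}$, $(\mathbf{L}\otimes\boldsymbol\pi)_{ij}=\sum_{t,t'}L^{i,j}_{t,t'}\pi_{tt'}$. The two problems are: - The MAD problem is $\min_{\boldsymbol\gamma\in\Gamma(\mathbf{w},\mathbf{w}'),\ \boldsymbol\pi\in\mathcal{A}(T,T')}\langle\mathbf{L}(\mathbf{X},\mathbf{X}')\otimes\boldsymbol\pi,\boldsymbol\gamma\rangle$, with Frobenius inner product. - Given a finite class set $\mathcal{C}$ and labels $\mathbf{Y}=(y_1,\dots,y_n)\in\mathcal{C}^n$, the $|\mathcal{C}|$-MAD problem is $\min\sum_{i,j}\gamma_{ij}\sum_{t,t'}L^{i,j}_{t,t'}\pi^{(y_i)}_{tt'}$.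 The minimum is over $\boldsymbol\gamma\in\Gamma(\mathbf{w},\mathbf{w}')$ and one alignment $\boldsymbol\pi^{(c)}\in\mathcal{A}(T,T')$ per class $c\in\mathcal{C}$. *)

theory Defs
  imports "HOL-Analysis.Analysis"
begin

(* A dataset of n time series
   of length T in R^q is X :: nat => nat => real^'q, with X i t the t-th time step
   of the i-th series (i < n, t < T).  Matrices are functions nat => nat => real
   restricted to the relevant index ranges (and required to vanish outside). *)

definition cost_tensor :: "(nat \<Rightarrow> nat \<Rightarrow> real^'q) \<Rightarrow> (nat \<Rightarrow> nat \<Rightarrow> real^'q)
    \<Rightarrow> nat \<Rightarrow> nat \<Rightarrow> nat \<Rightarrow> nat \<Rightarrow> real" where
  "cost_tensor X X' i j t t' = (norm (X i t - X' j t'))\<^sup>2"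

definition couplings :: "nat \<Rightarrow> (nat \<Rightarrow> real) \<Rightarrow> (nat \<Rightarrow> real) \<Rightarrow> (nat \<Rightarrow> nat \<Rightarrow> real) set" where
  "couplings n w w' = {\<gamma>.
     (\<forall>i j. (i < n \<and> j < n \<longrightarrow> \<gamma> i j \<ge> 0) \<and> (\<not> (i < n \<and> j < n) \<longrightarrow> \<gamma> i j = 0)) \<and>
     (\<forall>i<n. (\<Sum>j<n. \<gamma> i j) = w i) \<and>
     (\<forall>j<n. (\<Sum>i<n. \<gamma> i j) = w' j)}"

definition uniform_weights :: "nat \<Rightarrow> nat \<Rightarrow> real" where
  "uniform_weights n = (\<lambda>_. 1 / real n)"

definition dtw_alignments :: "nat \<Rightarrow> nat \<Rightarrow> (nat \<Rightarrow> nat \<Rightarrow> real) set" where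
  "dtw_alignments T T' = {\<pi>. \<exists>p :: (nat \<times> nat) list.
     p \<noteq> [] \<and> hd p = (0, 0) \<and> last p = (T - 1, T' - 1) \<and>
     (\<forall>k. Suc k < length p \<longrightarrow>
        p ! Suc k \<in> {(fst (p ! k) + 1, snd (p ! k)), (fst (p ! k), snd (p ! k) + 1),
                      (fst (p ! k) + 1, snd (p ! k) + 1)}) \<and>
     (\<forall>t t'. \<pi> t t' = (if (t, t') \<in> set p then 1 else 0))}"

definition mad_cost :: "nat \<Rightarrow> nat \<Rightarrow> nat \<Rightarrow> (nat \<Rightarrow> nat \<Rightarrow> real^'q) \<Rightarrow> (nat \<Rightarrow> nat \<Rightarrow> real^'q)
    \<Rightarrow> (nat \<Rightarrow> nat \<Rightarrow> real) \<Rightarrow> (nat \<Rightarrow> nat \<Rightarrow> real) \<Rightarrow> real" where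
  "mad_cost n T T' X X' \<gamma> \<pi> =
     (\<Sum>i<n. \<Sum>j<n. \<gamma> i j * (\<Sum>t<T. \<Sum>t'<T'. cost_tensor X X' i j t t' * \<pi> t t'))"

definition cmad_cost :: "nat \<Rightarrow> nat \<Rightarrow> nat \<Rightarrow> (nat \<Rightarrow> nat \<Rightarrow> real^'q) \<Rightarrow> (nat \<Rightarrow> nat \<Rightarrow> real^'q)
    \<Rightarrow> (nat \<Rightarrow> 'c) \<Rightarrow> (nat \<Rightarrow> nat \<Rightarrow> real) \<Rightarrow> ('c \<Rightarrow> nat \<Rightarrow> nat \<Rightarrow> real) \<Rightarrow> real" where
  "cmad_cost n T T' X X' Y \<gamma> Pa =
     (\<Sum>i<n. \<Sum>j<n. \<gamma> i j * (\<Sum>t<T. \<Sum>t'<T'. cost_tensor X X' i j t t' * Pa (Y i) t t'))"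

definition mad_optimal where
  "mad_optimal n T T' X X' w w' \<gamma> \<pi> \<longleftrightarrow>
     \<gamma> \<in> couplings n w w' \<and> \<pi> \<in> dtw_alignments T T' \<and>
     (\<forall>\<gamma>2 \<in> couplings n w w'. \<forall>\<pi>2 \<in> dtw_alignments T T'.
        mad_cost n T T' X X' \<gamma> \<pi> \<le> mad_cost n T T' X X' \<gamma>2 \<pi>2)"

definition cmad_optimal where
  "cmad_optimal n T T' X X' C Y w w' \<gamma> Pa \<longleftrightarrow>
     \<gamma> \<in> couplings n w w' \<and> (\<forall>c\<in>C. Pa c \<in> dtw_alignments T T') \<and>
     (\<forall>\<gamma>2 \<in> couplings n w w'. \<forall>Pa2. (\<forall>c\<in>C. Pa2 c \<in> dtw_alignments T T') \<longrightarrow>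
        cmad_cost n T T' X X' Y \<gamma> Pa \<le> cmad_cost n T T' X X' Y \<gamma>2 Pa2)"

definition is_scaled_permutation :: "nat \<Rightarrow> (nat \<Rightarrow> nat \<Rightarrow> real) \<Rightarrow> bool" where
  "is_scaled_permutation n \<gamma> \<longleftrightarrow>
     (\<exists>\<sigma>. bij_betw \<sigma> {..<n} {..<n} \<and>
        (\<forall>i<n. \<forall>j<n. real n * \<gamma> i j = (if j = \<sigma> i then 1 else 0)))"

end

theory Submission
  imports Defs
begin

(* For fixed alignments the MAD objective is linear in the coupling, and with uniform weights the
   couplings are exactly the doubly stochastic matrices scaled by 1/n.  Peeling off permutation
   matrices (which exist in the support by Hall's marriage theorem) shows that such a linear
   functional is bounded below, at every coupling, by its value at some scaled permutation matrix:
   this is the Birkhoff-von Neumann theorem.  As there are only finitely many DTW alignments, a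
   minimum over the finitely many pairs (permutation, alignments) is an optimal solution whose
   coupling is a scaled permutation. *)

definition hall_condition :: "'a set \<Rightarrow> ('a \<Rightarrow> 'b set) \<Rightarrow> bool" where
  "hall_condition I S \<longleftrightarrow> (\<forall>J\<subseteq>I. card J \<le> card (\<Union>(S ` J)))"

lemma hall_condition_subset: "hall_condition I S \<Longrightarrow> J \<subseteq> I \<Longrightarrow> hall_condition J S"
  unfolding hall_condition_def by blast

lemma hall_condition_Diff_tight:
  assumes fin: "finite I" "\<forall>i\<in>I. finite (S i)" and hall: "hall_condition I S"
    and J: "J \<subseteq> I" "card (\<Union>(S ` J)) = card J"
  shows "hall_condition (I - J) (\<lambda>i. S i - \<Union>(S ` J))"
  unfolding hall_condition_def
proof (intro allI impI)
  fix K assume K: "K \<subseteq> I - J"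
  let ?U = "\<Union>(S ` J)"
  have fin_UN: "finite (\<Union>(S ` L))" if "L \<subseteq> I" for L
    using finite_subset[OF that fin(1)] that fin(2) by (auto intro!: finite_UN_I)
  have fin': "finite K" "finite J" "finite (\<Union>((\<lambda>i. S i - ?U) ` K))" "finite ?U"
    using K J(1) fin(1) fin_UN[of K] fin_UN[of J] by (auto intro: finite_subset)
  have "card K + card J = card (K \<union> J)"
    using K fin' by (subst card_Un_disjoint) auto
  also have "\<dots> \<le> card (\<Union>(S ` (K \<union> J)))"
    using hall K J(1) unfolding hall_condition_def by blast
  also have "\<Union>(S ` (K \<union> J)) = \<Union>((\<lambda>i. S i - ?U) ` K) \<union> ?U" by blast
  also have "card \<dots> = card (\<Union>((\<lambda>i. S i - ?U) ` K)) + card ?U"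
    using fin' by (intro card_Un_disjoint) auto
  finally show "card K \<le> card (\<Union>((\<lambda>i. S i - ?U) ` K))" using J(2) by simp
qed

lemma hall_condition_Diff_singleton:
  assumes strict: "\<forall>K. K \<noteq> {} \<and> K \<subset> I \<longrightarrow> card K < card (\<Union>(S ` K))" and "i \<in> I"
  shows "hall_condition (I - {i}) (\<lambda>k. S k - {x})"
  unfolding hall_condition_def
proof (intro allI impI)
  fix K assume K: "K \<subseteq> I - {i}"
  show "card K \<le> card (\<Union>((\<lambda>k. S k - {x}) ` K))"
  proof (cases "K = {}")
    case False
    then have "card K < card (\<Union>(S ` K))" using strict K \<open>i \<in> I\<close> by blast
    moreover have "card (\<Union>(S ` K)) - 1 \<le> card (\<Union>(S ` K) - {x})"
      by (simp add: card_Diff_singleton_if)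
    moreover have "\<Union>((\<lambda>k. S k - {x}) ` K) = \<Union>(S ` K) - {x}" by blast
    ultimately show ?thesis by simp
  qed simp
qed

theorem hall_marriage:
  assumes "finite I" "\<forall>i\<in>I. finite (S i)" "hall_condition I S"
  shows "\<exists>f. inj_on f I \<and> (\<forall>i\<in>I. f i \<in> S i)"
  using assms
proof (induction "card I" arbitrary: I S rule: less_induct)
  case less
  note fin = less.prems(1,2) and hall = less.prems(3)
  consider "I = {}"
    | J where "J \<noteq> {}" "J \<subset> I" "card (\<Union>(S ` J)) \<le> card J"
    | "I \<noteq> {}" "\<forall>J. J \<noteq> {} \<and> J \<subset> I \<longrightarrow> card J < card (\<Union>(S ` J))"
    using not_le by blast
  then show ?case
  proof cases
    case 1
    then show ?thesis by simp
  next
    case (2 J)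
    let ?U = "\<Union>(S ` J)"
    have J: "finite J" "card J < card I" "card (I - J) < card I"
      using 2 fin by (auto intro: psubset_card_mono finite_subset
          simp: card_Diff_subset psubset_imp_subset card_gt_0_iff)
    have tight: "card ?U = card J"
      using hall 2 unfolding hall_condition_def by (meson le_antisym psubset_imp_subset)
    have "hall_condition J S" using hall 2 hall_condition_subset by blast
    then have "\<exists>f. inj_on f J \<and> (\<forall>i\<in>J. f i \<in> S i)"
      using fin 2 by (intro less.hyps[OF J(2,1)]) auto
    then obtain f1 where f1: "inj_on f1 J" "\<forall>i\<in>J. f1 i \<in> S i" by blast
    have "hall_condition (I - J) (\<lambda>i. S i - ?U)"
      using 2 by (intro hall_condition_Diff_tight[OF fin hall _ tight]) blast
    then have "\<exists>f. inj_on f (I - J) \<and> (\<forall>i\<in>I - J. f i \<in> S i - ?U)"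
      using fin by (intro less.hyps[OF J(3)]) auto
    then obtain f2 where f2: "inj_on f2 (I - J)" "\<forall>i\<in>I - J. f2 i \<in> S i - ?U"
      by blast
    define f where "f i = (if i \<in> J then f1 i else f2 i)" for i
    have "inj_on f J" using f1(1) by (auto simp: f_def inj_on_def)
    moreover have "inj_on f (I - J)" using f2(1) by (auto simp: f_def inj_on_def)
    moreover have "f ` J \<subseteq> ?U" using f1(2) by (auto simp: f_def)
    moreover have "f ` (I - J) \<inter> ?U = {}" using f2(2) by (auto simp: f_def)
    ultimately have "inj_on f (J \<union> (I - J))" unfolding inj_on_Un by blast
    moreover have "J \<union> (I - J) = I" using 2 by blast
    moreover have "\<forall>i\<in>I. f i \<in> S i" using f1(2) f2(2) by (simp add: f_def)
    ultimately show ?thesis by auto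
  next
    case 3
    then obtain i where i: "i \<in> I" by blast
    have "card {i} \<le> card (\<Union>(S ` {i}))"
      using hall i unfolding hall_condition_def by blast
    then obtain x where x: "x \<in> S i" by fastforce
    have "\<exists>f. inj_on f (I - {i}) \<and> (\<forall>k\<in>I - {i}. f k \<in> S k - {x})"
      using fin
      by (intro less.hyps[OF card_Diff1_less[OF fin(1) i]] hall_condition_Diff_singleton[OF 3(2) i])
        auto
    then obtain f2 where f2: "inj_on f2 (I - {i})" "\<forall>k\<in>I - {i}. f2 k \<in> S k - {x}"
      by blast
    have "inj_on (f2(i := x)) (insert i (I - {i}))"
      using f2 by (auto simp: inj_on_def)
    moreover have "insert i (I - {i}) = I" using i by blast
    moreover have "\<forall>k\<in>I. (f2(i := x)) k \<in> S k" using f2(2) x by simp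
    ultimately show ?thesis by auto
  qed
qed

definition bistochastic :: "nat \<Rightarrow> real \<Rightarrow> (nat \<Rightarrow> nat \<Rightarrow> real) \<Rightarrow> bool" where
  "bistochastic n s A \<longleftrightarrow>
     (\<forall>i<n. \<forall>j<n. 0 \<le> A i j) \<and> (\<forall>i<n. (\<Sum>j<n. A i j) = s) \<and> (\<forall>j<n. (\<Sum>i<n. A i j) = s)"

lemma bistochastic_hall_condition:
  assumes A: "bistochastic n s A" and "0 < s"
  shows "hall_condition {..<n} (\<lambda>i. {j. j < n \<and> 0 < A i j})"
  unfolding hall_condition_def
proof (intro allI impI)
  fix J assume J: "J \<subseteq> {..<n}"
  define U where "U = \<Union>((\<lambda>i. {j. j < n \<and> 0 < A i j}) ` J)"
  have U: "U \<subseteq> {..<n}" by (auto simp: U_def)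
  have row: "(\<Sum>j\<in>U. A i j) = s" if "i \<in> J" for i
  proof -
    have "A i j = 0" if "j < n" "j \<notin> U" for j
    proof -
      have "\<not> 0 < A i j" using that \<open>i \<in> J\<close> unfolding U_def by blast
      moreover have "0 \<le> A i j" using A \<open>i \<in> J\<close> J that(1) unfolding bistochastic_def by blast
      ultimately show ?thesis by simp
    qed
    then have "(\<Sum>j\<in>U. A i j) = (\<Sum>j<n. A i j)"
      using U by (intro sum.mono_neutral_left) auto
    also have "\<dots> = s" using that J A by (auto simp: bistochastic_def)
    finally show ?thesis .
  qed
  have "s * card J = (\<Sum>i\<in>J. \<Sum>j\<in>U. A i j)" using row by simp
  also have "\<dots> = (\<Sum>j\<in>U. \<Sum>i\<in>J. A i j)" by (rule sum.swap)
  also have "\<dots> \<le> (\<Sum>j\<in>U. \<Sum>i<n. A i j)"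
    using J U A by (intro sum_mono sum_mono2) (auto simp: bistochastic_def)
  also have "\<dots> = s * card U" using U A by (simp add: bistochastic_def subset_iff)
  finally have "card J \<le> card U" using \<open>0 < s\<close> by simp
  then show "card J \<le> card (\<Union>((\<lambda>i. {j. j < n \<and> 0 < A i j}) ` J))" by (simp add: U_def)
qed

lemma bistochastic_ex_permutation_support:
  assumes "bistochastic n s A" "0 < s"
  shows "\<exists>\<sigma>. \<sigma> permutes {..<n} \<and> (\<forall>i<n. 0 < A i (\<sigma> i))"
proof -
  obtain f where f: "inj_on f {..<n}" "\<forall>i<n. f i < n \<and> 0 < A i (f i)"
    using hall_marriage[OF _ _ bistochastic_hall_condition[OF assms]] by auto
  define \<sigma> where "\<sigma> i = (if i < n then f i else i)" for i
  have "inj_on \<sigma> {..<n}" "\<sigma> ` {..<n} \<subseteq> {..<n}" using f by (auto simp: \<sigma>_def inj_on_def)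
  then have "bij_betw \<sigma> {..<n} {..<n}" by (simp add: bij_betw_def endo_inj_surj)
  then have "\<sigma> permutes {..<n}" by (rule bij_imp_permutes) (simp add: \<sigma>_def)
  then show ?thesis using f by (auto simp: \<sigma>_def)
qed

lemma sum_permutes_delta:
  assumes "\<sigma> permutes S" "finite S" "j \<in> S"
  shows "(\<Sum>i\<in>S. if j = \<sigma> i then c else 0) = c"
proof -
  have "(\<Sum>i\<in>S. (\<lambda>k. if j = k then c else 0) (\<sigma> i)) = (\<Sum>k\<in>S. if j = k then c else 0)"
    by (rule sum.reindex_bij_betw[OF permutes_imp_bij[OF assms(1)]])
  then show ?thesis using assms(2,3) by simp
qed

lemma bistochastic_diff_permutation:
  assumes A: "bistochastic n s A" and \<sigma>: "\<sigma> permutes {..<n}" and c: "\<forall>i<n. c \<le> A i (\<sigma> i)"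
  shows "bistochastic n (s - c) (\<lambda>i j. A i j - (if j = \<sigma> i then c else 0))"
proof -
  have "\<sigma> i < n" if "i < n" for i using permutes_in_image[OF \<sigma>] that by simp
  then show ?thesis
    using A c sum_permutes_delta[OF \<sigma>, of _ c]
    by (auto simp: bistochastic_def sum_subtractf)
qed

definition matrix_support :: "nat \<Rightarrow> (nat \<Rightarrow> nat \<Rightarrow> real) \<Rightarrow> (nat \<times> nat) set" where
  "matrix_support n A = {(i, j). i < n \<and> j < n \<and> A i j \<noteq> 0}"

lemma card_matrix_support_diff_permutation:
  assumes "\<sigma> permutes {..<n}" "\<forall>i<n. 0 < A i (\<sigma> i)" "i0 < n" "A i0 (\<sigma> i0) = c"
  shows "card (matrix_support n (\<lambda>i j. A i j - (if j = \<sigma> i then c else 0)))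
    < card (matrix_support n A)"
proof (rule psubset_card_mono)
  show "finite (matrix_support n A)"
    by (rule finite_subset[of _ "{..<n} \<times> {..<n}"]) (auto simp: matrix_support_def)
  have "\<sigma> i0 < n" using permutes_in_image[OF assms(1)] assms(3) by simp
  moreover have "0 < A i0 (\<sigma> i0)" using assms(2)[rule_format, OF assms(3)] .
  ultimately have "(i0, \<sigma> i0) \<in> matrix_support n A"
    using assms(3) by (simp add: matrix_support_def)
  moreover have "(i0, \<sigma> i0) \<notin> matrix_support n (\<lambda>i j. A i j - (if j = \<sigma> i then c else 0))"
    using assms(4) by (simp add: matrix_support_def)
  moreover have "matrix_support n (\<lambda>i j. A i j - (if j = \<sigma> i then c else 0)) \<subseteq> matrix_support n A"
    using assms(2) by (auto simp: matrix_support_def split: if_splits)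
  ultimately show "matrix_support n (\<lambda>i j. A i j - (if j = \<sigma> i then c else 0)) \<subset> matrix_support n A"
    by blast
qed

lemma sum_mult_diff_permutation:
  fixes A M :: "nat \<Rightarrow> nat \<Rightarrow> real"
  assumes "\<sigma> permutes {..<n}"
  shows "(\<Sum>i<n. \<Sum>j<n. (A i j - (if j = \<sigma> i then c else 0)) * M i j)
    = (\<Sum>i<n. \<Sum>j<n. A i j * M i j) - c * (\<Sum>i<n. M i (\<sigma> i))"
proof -
  have "(\<Sum>j<n. (A i j - (if j = \<sigma> i then c else 0)) * M i j) = (\<Sum>j<n. A i j * M i j) - c * M i (\<sigma> i)"
    if "i < n" for i
  proof -
    have "(\<Sum>j<n. (A i j - (if j = \<sigma> i then c else 0)) * M i j)
        = (\<Sum>j<n. A i j * M i j - (if j = \<sigma> i then c * M i j else 0))"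
      by (rule sum.cong) (auto simp: algebra_simps)
    then show ?thesis using permutes_in_image[OF assms] that by (simp add: sum_subtractf)
  qed
  then show ?thesis by (simp add: sum_subtractf sum_distrib_left)
qed

theorem bistochastic_ex_permutation_le:
  fixes M :: "nat \<Rightarrow> nat \<Rightarrow> real"
  assumes "bistochastic n s A"
  shows "\<exists>\<sigma>. \<sigma> permutes {..<n} \<and> s * (\<Sum>i<n. M i (\<sigma> i)) \<le> (\<Sum>i<n. \<Sum>j<n. A i j * M i j)"
  using assms
proof (induction "card (matrix_support n A)" arbitrary: A s rule: less_induct)
  case less
  let ?v = "\<lambda>\<tau>. \<Sum>i<n. M i (\<tau> i)"
  consider "n = 0" | "0 < n" "s \<le> 0" | "0 < n" "0 < s" by linarith
  then show ?case
  proof cases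
    case 1
    then show ?thesis using permutes_id by fastforce
  next
    case 2
    have "0 \<le> s" using less.prems 2(1) sum_nonneg[of "{..<n}" "A 0"] by (auto simp: bistochastic_def)
    with 2 have "s = 0" by simp
    with less.prems have "A i j = 0" if "i < n" "j < n" for i j
      using that sum_nonneg_eq_0_iff[of "{..<n}" "A i"] by (auto simp: bistochastic_def)
    with \<open>s = 0\<close> show ?thesis using permutes_id by fastforce
  next
    case 3
    obtain \<sigma> where \<sigma>: "\<sigma> permutes {..<n}" "\<forall>i<n. 0 < A i (\<sigma> i)"
      using bistochastic_ex_permutation_support[OF less.prems 3(2)] by blast
    define c where "c = Min ((\<lambda>i. A i (\<sigma> i)) ` {..<n})"
    have "c \<in> (\<lambda>i. A i (\<sigma> i)) ` {..<n}" unfolding c_def using 3(1) by (intro Min_in) auto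
    then obtain i0 where i0: "i0 < n" "A i0 (\<sigma> i0) = c" by auto
    have c_le: "\<forall>i<n. c \<le> A i (\<sigma> i)" by (simp add: c_def)
    have "0 < c" using i0 \<sigma>(2) by auto
    have "c \<le> s"
      using less.prems i0 permutes_in_image[OF \<sigma>(1)] member_le_sum[of "\<sigma> i0" "{..<n}" "A i0"]
      by (auto simp: bistochastic_def)
    define A' where "A' i j = A i j - (if j = \<sigma> i then c else 0)" for i j
    have "bistochastic n (s - c) A'"
      unfolding A'_def by (rule bistochastic_diff_permutation[OF less.prems \<sigma>(1) c_le])
    moreover have "card (matrix_support n A') < card (matrix_support n A)"
      unfolding A'_def by (rule card_matrix_support_diff_permutation[of \<sigma> n A, OF \<sigma> i0])
    ultimately obtain \<sigma>' where \<sigma>': "\<sigma>' permutes {..<n}"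
      "(s - c) * ?v \<sigma>' \<le> (\<Sum>i<n. \<Sum>j<n. A' i j * M i j)"
      using less.hyps by blast
    obtain \<tau> where \<tau>: "\<tau> permutes {..<n}" "?v \<tau> \<le> ?v \<sigma>" "?v \<tau> \<le> ?v \<sigma>'"
      using \<sigma>(1) \<sigma>'(1) by (metis nle_le order_refl)
    have "s * ?v \<tau> = (s - c) * ?v \<tau> + c * ?v \<tau>" by (simp add: algebra_simps)
    also have "\<dots> \<le> (s - c) * ?v \<sigma>' + c * ?v \<sigma>"
      using \<tau> \<open>0 < c\<close> \<open>c \<le> s\<close> by (intro add_mono mult_left_mono) auto
    also have "\<dots> \<le> (\<Sum>i<n. \<Sum>j<n. A' i j * M i j) + c * ?v \<sigma>" using \<sigma>'(2) by simp
    also have "\<dots> = (\<Sum>i<n. \<Sum>j<n. A i j * M i j)"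
      unfolding A'_def sum_mult_diff_permutation[OF \<sigma>(1)] by simp
    finally show ?thesis using \<tau>(1) by blast
  qed
qed

definition perm_coupling :: "nat \<Rightarrow> (nat \<Rightarrow> nat) \<Rightarrow> nat \<Rightarrow> nat \<Rightarrow> real" where
  "perm_coupling n \<sigma> i j = (if i < n \<and> j < n \<and> j = \<sigma> i then 1 / real n else 0)"

lemma perm_coupling_in_couplings:
  assumes \<sigma>: "\<sigma> permutes {..<n}"
  shows "perm_coupling n \<sigma> \<in> couplings n (uniform_weights n) (uniform_weights n)"
proof -
  have \<sigma>n: "\<sigma> i < n" if "i < n" for i using permutes_in_image[OF \<sigma>] that by simp
  have "(\<Sum>j<n. perm_coupling n \<sigma> i j) = 1 / real n" if "i < n" for i
  proof -
    have "(\<Sum>j<n. perm_coupling n \<sigma> i j) = (\<Sum>j<n. if j = \<sigma> i then 1 / real n else 0)"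
      using that by (intro sum.cong) (auto simp: perm_coupling_def)
    then show ?thesis using \<sigma>n[OF that] by simp
  qed
  moreover have "(\<Sum>i<n. perm_coupling n \<sigma> i j) = 1 / real n" if "j < n" for j
  proof -
    have "(\<Sum>i<n. perm_coupling n \<sigma> i j) = (\<Sum>i<n. if j = \<sigma> i then 1 / real n else 0)"
      using that by (intro sum.cong) (auto simp: perm_coupling_def)
    then show ?thesis using sum_permutes_delta[OF \<sigma>] that by simp
  qed
  ultimately show ?thesis
    by (auto simp: couplings_def uniform_weights_def perm_coupling_def)
qed

lemma perm_coupling_scaled_permutation:
  "\<sigma> permutes {..<n} \<Longrightarrow> is_scaled_permutation n (perm_coupling n \<sigma>)"
  unfolding is_scaled_permutation_def perm_coupling_def by (auto intro: permutes_imp_bij)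

lemma sum_perm_coupling_mult:
  assumes \<sigma>: "\<sigma> permutes {..<n}"
  shows "(\<Sum>i<n. \<Sum>j<n. perm_coupling n \<sigma> i j * M i j) = (\<Sum>i<n. M i (\<sigma> i)) / real n"
proof -
  have "(\<Sum>j<n. perm_coupling n \<sigma> i j * M i j) = M i (\<sigma> i) / real n" if "i < n" for i
  proof -
    have "(\<Sum>j<n. perm_coupling n \<sigma> i j * M i j) = (\<Sum>j<n. if j = \<sigma> i then M i j / real n else 0)"
      using that by (intro sum.cong) (auto simp: perm_coupling_def)
    then show ?thesis using permutes_in_image[OF \<sigma>] that by simp
  qed
  then show ?thesis by (simp add: sum_divide_distrib)
qed

lemma uniform_couplings_bistochastic:
  "\<gamma> \<in> couplings n (uniform_weights n) (uniform_weights n) \<Longrightarrow> bistochastic n (1 / real n) \<gamma>"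
  by (simp add: couplings_def bistochastic_def uniform_weights_def)

lemma ex_optimal_perm_coupling:
  fixes M :: "'p \<Rightarrow> nat \<Rightarrow> nat \<Rightarrow> real"
  assumes "finite Q" "Q \<noteq> {}"
  shows "\<exists>\<sigma> q. \<sigma> permutes {..<n} \<and> q \<in> Q \<and>
    (\<forall>\<gamma>\<in>couplings n (uniform_weights n) (uniform_weights n). \<forall>q'\<in>Q.
       (\<Sum>i<n. \<Sum>j<n. perm_coupling n \<sigma> i j * M q i j) \<le> (\<Sum>i<n. \<Sum>j<n. \<gamma> i j * M q' i j))"
proof -
  define v where "v = (\<lambda>(\<sigma>, q). \<Sum>i<n. M q i (\<sigma> i))"
  define P where "P = {\<sigma>. \<sigma> permutes {..<n}}"
  obtain q0 where "q0 \<in> Q" using assms(2) by blast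
  then have "P \<times> Q \<noteq> {}" by (auto simp: P_def intro: permutes_id)
  moreover have "finite (P \<times> Q)" using assms(1) by (simp add: P_def finite_permutations)
  ultimately have "\<exists>x. is_arg_min v (\<lambda>x. x \<in> P \<times> Q) x" by (rule ex_is_arg_min_if_finite[rotated])
  then obtain \<sigma> q where "is_arg_min v (\<lambda>x. x \<in> P \<times> Q) (\<sigma>, q)"
    by (auto simp: split_paired_Ex)
  then have \<sigma>q: "\<sigma> permutes {..<n}" "q \<in> Q"
    and min: "\<And>\<tau> q'. \<tau> permutes {..<n} \<Longrightarrow> q' \<in> Q \<Longrightarrow> v (\<sigma>, q) \<le> v (\<tau>, q')"
    unfolding is_arg_min_linorder P_def by auto
  have "(\<Sum>i<n. \<Sum>j<n. perm_coupling n \<sigma> i j * M q i j) \<le> (\<Sum>i<n. \<Sum>j<n. \<gamma> i j * M q' i j)"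
    if \<gamma>: "\<gamma> \<in> couplings n (uniform_weights n) (uniform_weights n)" and "q' \<in> Q" for \<gamma> q'
  proof -
    obtain \<tau> where \<tau>: "\<tau> permutes {..<n}"
      "1 / real n * v (\<tau>, q') \<le> (\<Sum>i<n. \<Sum>j<n. \<gamma> i j * M q' i j)"
      using bistochastic_ex_permutation_le[OF uniform_couplings_bistochastic[OF \<gamma>]]
      unfolding v_def by auto
    have "(\<Sum>i<n. \<Sum>j<n. perm_coupling n \<sigma> i j * M q i j) = v (\<sigma>, q) / real n"
      unfolding v_def by (simp add: sum_perm_coupling_mult[OF \<sigma>q(1)])
    also have "\<dots> \<le> v (\<tau>, q') / real n"
      using min[OF \<tau>(1) \<open>q' \<in> Q\<close>] by (simp add: divide_right_mono)
    finally show ?thesis using \<tau>(2) by simp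
  qed
  then show ?thesis using \<sigma>q by blast
qed

lemma dtw_path_le_last:
  fixes p :: "(nat \<times> nat) list"
  assumes path: "\<forall>k. Suc k < length p \<longrightarrow>
        p ! Suc k \<in> {(fst (p ! k) + 1, snd (p ! k)), (fst (p ! k), snd (p ! k) + 1),
                      (fst (p ! k) + 1, snd (p ! k) + 1)}"
    and "x \<in> set p"
  shows "fst x \<le> fst (last p) \<and> snd x \<le> snd (last p)"
proof -
  obtain k where k: "k < length p" "x = p ! k" using \<open>x \<in> set p\<close> by (auto simp: in_set_conv_nth)
  have mono: "fst (p ! l) \<le> fst (p ! Suc l) \<and> snd (p ! l) \<le> snd (p ! Suc l)"
    if "Suc l < length p" for l
    using path[rule_format, OF that] by auto
  have "fst (p ! k) \<le> fst (p ! l) \<and> snd (p ! k) \<le> snd (p ! l)" if "k \<le> l" "l < length p" for l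
    using that
  proof (induction l rule: dec_induct)
    case (step l)
    then show ?case using mono[of l] by (meson Suc_lessD order_trans)
  qed simp
  moreover have "last p = p ! (length p - 1)" using k(1) by (intro last_conv_nth) auto
  ultimately show ?thesis using k by simp
qed

lemma finite_dtw_alignments: "finite (dtw_alignments T T')"
proof -
  define ind :: "(nat \<times> nat) set \<Rightarrow> nat \<Rightarrow> nat \<Rightarrow> real"
    where "ind S = (\<lambda>t t'. if (t, t') \<in> S then 1 else 0)" for S
  have "dtw_alignments T T' \<subseteq> ind ` Pow ({..T - 1} \<times> {..T' - 1})"
  proof
    fix \<pi> assume "\<pi> \<in> dtw_alignments T T'"
    then obtain p where p: "last p = (T - 1, T' - 1)"
      "\<forall>k. Suc k < length p \<longrightarrow>
        p ! Suc k \<in> {(fst (p ! k) + 1, snd (p ! k)), (fst (p ! k), snd (p ! k) + 1),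
                      (fst (p ! k) + 1, snd (p ! k) + 1)}"
      "\<forall>t t'. \<pi> t t' = ind (set p) t t'"
      unfolding dtw_alignments_def ind_def by blast
    have "set p \<subseteq> {..T - 1} \<times> {..T' - 1}" using dtw_path_le_last[OF p(2)] p(1) by fastforce
    moreover have "\<pi> = ind (set p)" using p(3) by blast
    ultimately show "\<pi> \<in> ind ` Pow ({..T - 1} \<times> {..T' - 1})" by blast
  qed
  then show ?thesis by (rule finite_subset) simp
qed

lemma dtw_alignments_nonempty:
  assumes "1 \<le> T" "1 \<le> T'"
  shows "dtw_alignments T T' \<noteq> {}"
proof -
  define f where "f k = (min k (T - 1), k - (T - 1))" for k
  define p where "p = map f [0..<T + T' - 1]"
  have "p \<noteq> []" "hd p = (0, 0)" using assms by (simp_all add: p_def f_def hd_map upt_rec)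
  moreover have "last p = (T - 1, T' - 1)"
    using assms \<open>p \<noteq> []\<close> by (simp add: p_def f_def last_map)
  moreover have "\<forall>k. Suc k < length p \<longrightarrow>
      p ! Suc k \<in> {(fst (p ! k) + 1, snd (p ! k)), (fst (p ! k), snd (p ! k) + 1),
                    (fst (p ! k) + 1, snd (p ! k) + 1)}"
    by (auto simp: p_def f_def nth_append)
  ultimately have "(\<lambda>t t'. if (t, t') \<in> set p then 1 else 0) \<in> dtw_alignments T T'"
    unfolding dtw_alignments_def by blast
  then show ?thesis by blast
qed

lemma cmad_cost_restrict:
  assumes "\<forall>i<n. Y i \<in> C"
  shows "cmad_cost n T T' X X' Y \<gamma> (restrict Pa C) = cmad_cost n T T' X X' Y \<gamma> Pa"
  using assms unfolding cmad_cost_def by simp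

lemma ex_mad_optimal_scaled_permutation:
  assumes "1 \<le> T" "1 \<le> T'"
  shows "\<exists>\<gamma> \<pi>. mad_optimal n T T' X X' (uniform_weights n) (uniform_weights n) \<gamma> \<pi>
                \<and> is_scaled_permutation n \<gamma>"
proof -
  obtain \<sigma> \<pi> where \<sigma>: "\<sigma> permutes {..<n}" and "\<pi> \<in> dtw_alignments T T'"
    and "\<forall>\<gamma>\<in>couplings n (uniform_weights n) (uniform_weights n). \<forall>\<pi>'\<in>dtw_alignments T T'.
      mad_cost n T T' X X' (perm_coupling n \<sigma>) \<pi> \<le> mad_cost n T T' X X' \<gamma> \<pi>'"
    using ex_optimal_perm_coupling[OF finite_dtw_alignments dtw_alignments_nonempty[OF assms],
        of n "\<lambda>\<pi> i j. \<Sum>t<T. \<Sum>t'<T'. cost_tensor X X' i j t t' * \<pi> t t'"]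
    unfolding mad_cost_def by blast
  then show ?thesis
    unfolding mad_optimal_def
    using perm_coupling_in_couplings[OF \<sigma>] perm_coupling_scaled_permutation[OF \<sigma>] by blast
qed

lemma ex_cmad_optimal_scaled_permutation:
  assumes "1 \<le> T" "1 \<le> T'" "finite C" and Y: "\<forall>i<n. Y i \<in> C"
  shows "\<exists>\<gamma> Pa. cmad_optimal n T T' X X' C Y (uniform_weights n) (uniform_weights n) \<gamma> Pa
                \<and> is_scaled_permutation n \<gamma>"
proof -
  let ?Q = "PiE C (\<lambda>_. dtw_alignments T T')"
  have "finite ?Q" "?Q \<noteq> {}"
    using assms finite_dtw_alignments dtw_alignments_nonempty
    by (simp_all add: finite_PiE PiE_eq_empty_iff)
  then obtain \<sigma> Pa where \<sigma>: "\<sigma> permutes {..<n}" and "Pa \<in> ?Q"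
    and opt: "\<forall>\<gamma>\<in>couplings n (uniform_weights n) (uniform_weights n). \<forall>Pa'\<in>?Q.
      cmad_cost n T T' X X' Y (perm_coupling n \<sigma>) Pa \<le> cmad_cost n T T' X X' Y \<gamma> Pa'"
    using ex_optimal_perm_coupling[of ?Q n
        "\<lambda>Pa i j. \<Sum>t<T. \<Sum>t'<T'. cost_tensor X X' i j t t' * Pa (Y i) t t'"]
    unfolding cmad_cost_def by blast
  have "cmad_cost n T T' X X' Y (perm_coupling n \<sigma>) Pa \<le> cmad_cost n T T' X X' Y \<gamma> Pa'"
    if "\<gamma> \<in> couplings n (uniform_weights n) (uniform_weights n)"
      and "\<forall>c\<in>C. Pa' c \<in> dtw_alignments T T'" for \<gamma> Pa'
    using opt that cmad_cost_restrict[OF Y, of T T' X X' \<gamma> Pa'] by (metis restrict_PiE_iff)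
  moreover have "\<forall>c\<in>C. Pa c \<in> dtw_alignments T T'" using \<open>Pa \<in> ?Q\<close> by auto
  ultimately show ?thesis
    unfolding cmad_optimal_def
    using perm_coupling_in_couplings[OF \<sigma>] perm_coupling_scaled_permutation[OF \<sigma>] by blast
qed

theorem mainTheorem2:
  fixes n T T' :: nat
    and X X' :: "nat \<Rightarrow> nat \<Rightarrow> real^'q"
    and C :: "'c set" and Y :: "nat \<Rightarrow> 'c"
  assumes "T \<ge> 1" and "T' \<ge> 1"
    and "finite C" and "\<forall>i<n. Y i \<in> C"
  shows "(\<exists>\<gamma> \<pi>. mad_optimal n T T' X X' (uniform_weights n) (uniform_weights n) \<gamma> \<pi>
                \<and> is_scaled_permutation n \<gamma>)
       \<and> (\<exists>\<gamma> Pa. cmad_optimal n T T' X X' C Y (uniform_weights n) (uniform_weights n) \<gamma> Pa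
                \<and> is_scaled_permutation n \<gamma>)"
  using ex_mad_optimal_scaled_permutation[OF assms(1,2)]
    ex_cmad_optimal_scaled_permutation[OF assms] by blast

end
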